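(* Let $\mathfrak{g}$ be a symmetric social storage network on $N$ agents with stability point $\hat\eta$, which has evolved from the null network and has $\kappa\ge2$ connected components. Suppose $\hat\eta$ is odd and $N>\hat\eta$. If $\mathfrak{g}$ is bilaterally stable, then at least $\kappa-1$ of its components consist of an even number of agents greater than $\hat\eta$.
   Context: A network is a simple undirected graph on a finite set $\mathbf{A}$ of $N$ agents, and $\eta_i(\mathfrak{g})$ is the degree (neighbourhood size) of $i$. Parameters are: disk failure rate $\lambda\in(0,1)$, per-link cost $c$, data worths $\beta_i>0$, storage $s_i$, data size $d_i$ and budget $b_i$. Remaining storage is $RS_i=s_i-\sum_{j\text{ neighbour of }i}d_j$ and remaining budget is $RB_i=b_i-c\,\eta_i(\mathfrak{g})$. A symmetric social storage network is one of the following four types. (a) SVN with sufficient storage under the Multi-Objective Framework (MO): - $\beta_i=\beta$, with $\beta,\lambda,c\in(0,1)$; - $s_i\ge\sum_{j\ne i}d_j$; - $u_i=\beta(1-\lambda^{\eta_i})-c\eta_i$; - it is assumed that $c<\beta(1-\lambda)$ and $L=|\ln(c/(\beta(1-\lambda)))|/|\ln\lambda|$ is not an integer; the stability point is $\hat\eta=\lceil L\rceil$. (b) SV-SRN under MO: - as in (a) but with $s_i=s$ and $d_i=d$ (with $s/d$ an integer) instead of sufficient storage; - the stability point is $\hat\eta=\min\{\lceil L\rceil,s/d\}$. (c) SVN with sufficient storage and budget under the Single-Objective Framework (SO): - $\beta_i=\beta$; - $s_i\ge\sum_{j\ne i}d_j$ and $b_i\ge c(N-1)$; - $u_i=\beta(1-\lambda^{\eta_i})$;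 - the stability point is $\hat\eta=N-1$. (d) SRN under SO: - $s_i=s$, $d_i=d$, $b_i=b$ (with $s/d$ and $b/c$ integers); - $u_i=\beta_i(1-\lambda^{\eta_i})$; - the stability point is $\hat\eta=\min\{s/d,b/c\}$. Agent $i$ is willing to add the link $\langle ij\rangle$ if $u_i(\mathfrak{g}+\langle ij\rangle)>u_i(\mathfrak{g})$, together with $RS_j\ge d_i$ in types (b) and (d), and additionally $RB_i\ge c$ in type (d). Bilateral stability means both of the following hold. 1. For every link $\langle ij\rangle$: if $u_i(\mathfrak{g}-\langle ij\rangle)>u_i(\mathfrak{g})$, then $u_j(\mathfrak{g}-\langle ij\rangle)<u_j(\mathfrak{g})$. 2. For every non-link $\langle ij\rangle$: if $i$ is willing to add $\langle ij\rangle$, then $j$ is not willing to add it. $\mathfrak{g}$ has evolved from the null network if it is obtained from the network with no links by a finite sequence of single link additions $\langle ij\rangle$, each performed only when both $i$ and $j$ are willing to add it at that moment. *)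

theory Defs
  imports Complex_Main
begin

text \<open>A network on the agent set A is a symmetric irreflexive relation g \<subseteq> A \<times> A;
  the undirected link \<langle>ij\<rangle> is represented by the two pairs (i,j) and (j,i).\<close>

datatype ssn_type = SVN_MO | SV_SRN_MO | SVN_SO | SRN_SO

record 'a ssn_params =
  lam    :: real              \<comment> \<open>disk failure rate \<lambda>\<close>
  cost   :: real
  worth  :: "'a \<Rightarrow> real"
  stor   :: "'a \<Rightarrow> real"
  dsize  :: "'a \<Rightarrow> real"
  budget :: "'a \<Rightarrow> real"

definition add_link :: "('a \<times> 'a) set \<Rightarrow> 'a \<Rightarrow> 'a \<Rightarrow> ('a \<times> 'a) set" where
  "add_link g i j = g \<union> {(i, j), (j, i)}"

definition del_link :: "('a \<times> 'a) set \<Rightarrow> 'a \<Rightarrow> 'a \<Rightarrow> ('a \<times> 'a) set" where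
  "del_link g i j = g - {(i, j), (j, i)}"

definition nbrs :: "('a \<times> 'a) set \<Rightarrow> 'a \<Rightarrow> 'a set" where
  "nbrs g i = {j. (i, j) \<in> g}"

definition deg :: "('a \<times> 'a) set \<Rightarrow> 'a \<Rightarrow> nat" where
  "deg g i = card (nbrs g i)"

fun is_MO :: "ssn_type \<Rightarrow> bool" where
  "is_MO SVN_MO = True"
| "is_MO SV_SRN_MO = True"
| "is_MO SVN_SO = False"
| "is_MO SRN_SO = False"

definition utility :: "ssn_type \<Rightarrow> 'a ssn_params \<Rightarrow> ('a \<times> 'a) set \<Rightarrow> 'a \<Rightarrow> real" where
  "utility T P g i =
     worth P i * (1 - lam P ^ deg g i) - (if is_MO T then cost P * real (deg g i) else 0)"

definition RS :: "'a ssn_params \<Rightarrow> ('a \<times> 'a) set \<Rightarrow> 'a \<Rightarrow> real" where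
  "RS P g i = stor P i - (\<Sum>j\<in>nbrs g i. dsize P j)"

definition RB :: "'a ssn_params \<Rightarrow> ('a \<times> 'a) set \<Rightarrow> 'a \<Rightarrow> real" where
  "RB P g i = budget P i - cost P * real (deg g i)"

definition Lval :: "real \<Rightarrow> real \<Rightarrow> real \<Rightarrow> real" where
  "Lval \<beta> l c = \<bar>ln (c / (\<beta> * (1 - l)))\<bar> / \<bar>ln l\<bar>"

definition symmetric_ssn :: "ssn_type \<Rightarrow> 'a set \<Rightarrow> 'a ssn_params \<Rightarrow> bool" where
  "symmetric_ssn T A P \<longleftrightarrow> finite A \<and> 0 < lam P \<and> lam P < 1 \<and>
    (case T of
       SVN_MO \<Rightarrow> (\<exists>\<beta>. (\<forall>i\<in>A. worth P i = \<beta>) \<and> 0 < \<beta> \<and> \<beta> < 1 \<and>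
                   0 < cost P \<and> cost P < 1 \<and>
                   (\<forall>i\<in>A. stor P i \<ge> (\<Sum>j\<in>A - {i}. dsize P j)) \<and>
                   cost P < \<beta> * (1 - lam P) \<and> Lval \<beta> (lam P) (cost P) \<notin> \<int>)
     | SV_SRN_MO \<Rightarrow> (\<exists>\<beta> s d. (\<forall>i\<in>A. worth P i = \<beta>) \<and> 0 < \<beta> \<and> \<beta> < 1 \<and>
                   0 < cost P \<and> cost P < 1 \<and>
                   (\<forall>i\<in>A. stor P i = s \<and> dsize P i = d) \<and> 0 < d \<and> s / d \<in> \<nat> \<and>
                   cost P < \<beta> * (1 - lam P) \<and> Lval \<beta> (lam P) (cost P) \<notin> \<int>)
     | SVN_SO \<Rightarrow> (\<exists>\<beta>. (\<forall>i\<in>A. worth P i = \<beta>) \<and> 0 < \<beta> \<and>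
                   (\<forall>i\<in>A. stor P i \<ge> (\<Sum>j\<in>A - {i}. dsize P j)) \<and>
                   (\<forall>i\<in>A. budget P i \<ge> cost P * (real (card A) - 1)))
     | SRN_SO \<Rightarrow> (\<exists>s d b. (\<forall>i\<in>A. worth P i > 0) \<and>
                   (\<forall>i\<in>A. stor P i = s \<and> dsize P i = d \<and> budget P i = b) \<and>
                   0 < d \<and> 0 < cost P \<and> s / d \<in> \<nat> \<and> b / cost P \<in> \<nat>))"

text \<open>Stability point \<eta>-hat (common values s, d, b, \<beta> read off at some agent of A).\<close>
definition stability_point :: "ssn_type \<Rightarrow> 'a set \<Rightarrow> 'a ssn_params \<Rightarrow> nat" where
  "stability_point T A P =
    (let i0 = (SOME i. i \<in> A);
         \<beta> = worth P i0; s = stor P i0; d = dsize P i0; b = budget P i0;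
         Lc = nat \<lceil>Lval \<beta> (lam P) (cost P)\<rceil>
     in case T of
          SVN_MO \<Rightarrow> Lc
        | SV_SRN_MO \<Rightarrow> min Lc (nat \<lfloor>s / d\<rfloor>)
        | SVN_SO \<Rightarrow> card A - 1
        | SRN_SO \<Rightarrow> min (nat \<lfloor>s / d\<rfloor>) (nat \<lfloor>b / cost P\<rfloor>))"

definition willing :: "ssn_type \<Rightarrow> 'a ssn_params \<Rightarrow> ('a \<times> 'a) set \<Rightarrow> 'a \<Rightarrow> 'a \<Rightarrow> bool" where
  "willing T P g i j \<longleftrightarrow>
     utility T P (add_link g i j) i > utility T P g i \<and>
     (T \<in> {SV_SRN_MO, SRN_SO} \<longrightarrow> RS P g j \<ge> dsize P i) \<and>
     (T = SRN_SO \<longrightarrow> RB P g i \<ge> cost P)"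

definition bilaterally_stable :: "ssn_type \<Rightarrow> 'a set \<Rightarrow> 'a ssn_params \<Rightarrow> ('a \<times> 'a) set \<Rightarrow> bool" where
  "bilaterally_stable T A P g \<longleftrightarrow>
     (\<forall>i j. (i, j) \<in> g \<longrightarrow>
        utility T P (del_link g i j) i > utility T P g i \<longrightarrow>
        utility T P (del_link g i j) j < utility T P g j) \<and>
     (\<forall>i\<in>A. \<forall>j\<in>A. i \<noteq> j \<longrightarrow> (i, j) \<notin> g \<longrightarrow>
        willing T P g i j \<longrightarrow> \<not> willing T P g j i)"

inductive evolved :: "ssn_type \<Rightarrow> 'a set \<Rightarrow> 'a ssn_params \<Rightarrow> ('a \<times> 'a) set \<Rightarrow> bool"
  for T A P where
  null: "evolved T A P {}"
| step: "\<lbrakk>evolved T A P g; i \<in> A; j \<in> A; i \<noteq> j; (i, j) \<notin> g;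
          willing T P g i j; willing T P g j i\<rbrakk> \<Longrightarrow> evolved T A P (add_link g i j)"

definition components :: "'a set \<Rightarrow> ('a \<times> 'a) set \<Rightarrow> 'a set set" where
  "components A g = (\<lambda>i. {j \<in> A. (i, j) \<in> g\<^sup>*}) ` A"

end

theory Submission
  imports Defs
begin

(*
  Along the evolution a link is only added when both endpoints have degree below the stability
  point, so every agent has degree at most that point. Bilateral stability forbids two non-adjacent
  agents of degree below it (both would be willing to link), so all such agents lie in one
  component and every other component is regular of the odd degree given by the stability point.
  In such a component the degree sum, an odd multiple of its size, counts every link twice, so
  its size is even; and any agent together with its neighbours lies in it, so its size exceeds
  the degree.
*)

definition simple_graph_on :: "'a set \<Rightarrow> ('a \<times> 'a) set \<Rightarrow> bool" where
  "simple_graph_on A g \<longleftrightarrow> g \<subseteq> A \<times> A \<and> sym g \<and> irrefl g"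

lemma nbrs_add_link:
  "nbrs (add_link g i j) k =
     (if k = i then insert j (nbrs g k) else if k = j then insert i (nbrs g k) else nbrs g k)"
  by (auto simp: add_link_def nbrs_def)

lemma nbrs_subset: "g \<subseteq> A \<times> A \<Longrightarrow> nbrs g i \<subseteq> A"
  by (auto simp: nbrs_def)

lemma finite_nbrs: "finite A \<Longrightarrow> g \<subseteq> A \<times> A \<Longrightarrow> finite (nbrs g i)"
  using nbrs_subset finite_subset by metis

lemma deg_add_link:
  assumes "finite (nbrs g i)" and "(i, j) \<notin> g"
  shows "deg (add_link g i j) i = Suc (deg g i)"
proof -
  have "j \<notin> nbrs g i"
    using assms(2) by (simp add: nbrs_def)
  then show ?thesis
    using assms(1) by (simp add: deg_def nbrs_add_link)
qed

lemma deg_add_link_other: "k \<noteq> i \<Longrightarrow> k \<noteq> j \<Longrightarrow> deg (add_link g i j) k = deg g k"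
  by (simp add: deg_def nbrs_add_link)

lemma add_link_commute: "add_link g i j = add_link g j i"
  by (auto simp: add_link_def)

lemma simple_graph_on_add_link:
  "simple_graph_on A g \<Longrightarrow> i \<in> A \<Longrightarrow> j \<in> A \<Longrightarrow> i \<noteq> j \<Longrightarrow> simple_graph_on A (add_link g i j)"
  by (auto simp: simple_graph_on_def add_link_def sym_def irrefl_def)

lemma deg_less_card:
  assumes "irrefl g" "finite X" "k \<in> X" "nbrs g k \<subseteq> X"
  shows "deg g k < card X"
proof -
  have "nbrs g k \<subseteq> X - {k}"
    using assms(1,4) by (auto simp: nbrs_def irrefl_def)
  then have "deg g k \<le> card (X - {k})"
    unfolding deg_def using assms(2) by (simp add: card_mono)
  also have "\<dots> < card X"
    using assms(2,3) by (meson card_Diff1_less)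
  finally show ?thesis .
qed

lemma even_card_sym_irrefl:
  assumes "finite R" "sym R" "irrefl R"
  shows "even (card R)"
  using assms
proof (induction "card R" arbitrary: R rule: less_induct)
  case less
  show ?case
  proof (cases "R = {}")
    case False
    then obtain a b where ab: "(a, b) \<in> R" by auto
    let ?E = "{(a, b), (b, a)}"
    have "?E \<subseteq> R" and "a \<noteq> b"
      using ab less.prems(2,3) by (auto simp: irrefl_def dest: symD)
    then have split: "card R = card (R - ?E) + 2"
      using less.prems(1) card_Diff_subset[of ?E R] card_mono[of R ?E] by auto
    have "sym (R - ?E)" "irrefl (R - ?E)"
      using less.prems(2,3) by (auto simp: sym_def irrefl_def)
    then have "even (card (R - ?E))"
      using less.hyps[of "R - ?E"] less.prems(1) split by simp
    with split show ?thesis by simp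
  qed simp
qed

lemma even_card_if_odd_regular:
  assumes "sym g" "irrefl g" "finite X" "g `` X \<subseteq> X"
    and "\<forall>k\<in>X. deg g k = \<eta>" "odd \<eta>"
  shows "even (card X)"
proof -
  have "g \<inter> X \<times> X = Sigma X (nbrs g)"
    using assms(4) unfolding nbrs_def by blast
  moreover have "finite (nbrs g k)" if "k \<in> X" for k
    using assms(3,4) that finite_subset[of "nbrs g k" X] unfolding nbrs_def by blast
  ultimately have "card (g \<inter> X \<times> X) = (\<Sum>k\<in>X. deg g k)"
    using assms(3) by (simp add: card_SigmaI deg_def)
  also have "\<dots> = \<eta> * card X"
    using assms(5) by simp
  finally have "card (g \<inter> X \<times> X) = \<eta> * card X" .
  moreover have "even (card (g \<inter> X \<times> X))"
    using assms(1-3) by (intro even_card_sym_irrefl) (auto simp: sym_def irrefl_def)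
  ultimately show ?thesis
    using assms(6) by simp
qed

lemma component_subset: "X \<in> components A g \<Longrightarrow> X \<subseteq> A"
  by (auto simp: components_def)

lemma component_closed:
  assumes "g \<subseteq> A \<times> A" "X \<in> components A g"
  shows "g `` X \<subseteq> X"
proof
  fix k
  assume "k \<in> g `` X"
  then obtain j where "j \<in> X" "(j, k) \<in> g" by blast
  moreover obtain i where "X = {j \<in> A. (i, j) \<in> g\<^sup>*}"
    using assms(2) by (auto simp: components_def)
  ultimately show "k \<in> X"
    using assms(1) by auto
qed

lemma component_of_member:
  assumes "sym g" "X \<in> components A g" "k \<in> X"
  shows "X = {j \<in> A. (k, j) \<in> g\<^sup>*}"
proof -
  obtain i where X: "X = {j \<in> A. (i, j) \<in> g\<^sup>*}"
    using assms(2) by (auto simp: components_def)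
  have ik: "(i, k) \<in> g\<^sup>*"
    using assms(3) X by blast
  then have "(k, i) \<in> g\<^sup>*"
    using assms(1) sym_rtrancl symD by metis
  with ik show ?thesis
    unfolding X by (blast intro: rtrancl_trans)
qed

lemma odd_regular_component:
  assumes "finite A" "simple_graph_on A g" "X \<in> components A g"
    and regular: "\<forall>k\<in>X. deg g k = \<eta>" and "odd \<eta>"
  shows "even (card X) \<and> \<eta> < card X"
proof
  have g: "g \<subseteq> A \<times> A" "sym g" "irrefl g"
    using assms(2) by (simp_all add: simple_graph_on_def)
  have fin: "finite X"
    using finite_subset[OF component_subset[OF assms(3)] assms(1)] .
  have closed: "g `` X \<subseteq> X"
    using g(1) assms(3) by (rule component_closed)
  show "even (card X)"
    using even_card_if_odd_regular[OF g(2,3) fin closed regular \<open>odd \<eta>\<close>] .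
  obtain k where k: "k \<in> X"
    using assms(3) unfolding components_def by blast
  have "nbrs g k \<subseteq> X"
    using closed k unfolding nbrs_def by blast
  with k have "deg g k < card X"
    by (rule deg_less_card[OF g(3) fin])
  then show "\<eta> < card X"
    using regular k by simp
qed

text \<open>If the vertices of degree below \<eta> are pairwise adjacent, they all lie in one component.\<close>
lemma components_regular_but_one:
  assumes "simple_graph_on A g" "\<forall>k\<in>A. deg g k \<le> \<eta>"
    and deficient_adjacent:
      "\<And>i j. i \<in> A \<Longrightarrow> j \<in> A \<Longrightarrow> i \<noteq> j \<Longrightarrow> deg g i < \<eta> \<Longrightarrow> deg g j < \<eta> \<Longrightarrow> (i, j) \<in> g"
  shows "\<exists>C \<subseteq> components A g. card (components A g) - 1 \<le> card C \<and>
           (\<forall>X\<in>C. \<forall>k\<in>X. deg g k = \<eta>)"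
proof (cases "\<exists>i0\<in>A. deg g i0 < \<eta>")
  case False
  then have "\<forall>k\<in>A. deg g k = \<eta>"
    using assms(2) by (simp add: not_less order_antisym)
  then have "\<forall>X\<in>components A g. \<forall>k\<in>X. deg g k = \<eta>"
    using component_subset by blast
  then show ?thesis by (intro exI[of _ "components A g"]) simp
next
  case True
  then obtain i0 where i0: "i0 \<in> A" "deg g i0 < \<eta>" by blast
  define X0 where "X0 = {j \<in> A. (i0, j) \<in> g\<^sup>*}"
  define C where "C = components A g - {X0}"
  have X0: "X = X0" if "X \<in> components A g" "i0 \<in> X" for X
    using component_of_member[OF _ that] assms(1) unfolding X0_def simple_graph_on_def by blast
  have "deg g k = \<eta>" if "X \<in> C" "k \<in> X" for X k
  proof (rule ccontr)
    assume "deg g k \<noteq> \<eta>"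
    moreover have "k \<in> A"
      using component_subset that unfolding C_def by blast
    ultimately have "deg g k < \<eta>"
      using assms(2) le_neq_implies_less by blast
    then have "i0 = k \<or> (k, i0) \<in> g"
      using deficient_adjacent i0 \<open>k \<in> A\<close> by blast
    moreover have "g `` X \<subseteq> X"
      using that assms(1) component_closed unfolding C_def simple_graph_on_def by blast
    ultimately have "i0 \<in> X"
      using that(2) by blast
    then show False
      using X0 that unfolding C_def by blast
  qed
  moreover have "card (components A g) - 1 \<le> card C"
    unfolding C_def by (simp add: card_Diff_singleton_if)
  moreover have "C \<subseteq> components A g"
    unfolding C_def by blast
  ultimately show ?thesis
    by blast
qed

lemma MO_payoff_increase_iff:
  fixes \<beta> l c :: real and k :: nat
  assumes "0 < \<beta>" "0 < l" "l < 1" "0 < c" "c < \<beta> * (1 - l)"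
  shows "\<beta> * (1 - l ^ k) - c * real k < \<beta> * (1 - l ^ Suc k) - c * real (Suc k) \<longleftrightarrow>
         k < nat \<lceil>Lval \<beta> l c\<rceil>"
proof -
  define r where "r = c / (\<beta> * (1 - l))"
  have pos: "\<beta> * (1 - l) > 0"
    using assms by simp
  have r: "0 < r" "r < 1"
    using assms pos by (auto simp: r_def field_simps)
  have "\<beta> * (1 - l ^ k) - c * real k < \<beta> * (1 - l ^ Suc k) - c * real (Suc k) \<longleftrightarrow>
        c < \<beta> * (1 - l) * l ^ k"
    by (simp add: algebra_simps)
  also have "\<dots> \<longleftrightarrow> r < l ^ k"
    using pos by (simp add: r_def pos_divide_less_eq mult.commute)
  also have "\<dots> \<longleftrightarrow> ln r < real k * ln l"
    using r assms(2) by (simp add: ln_realpow[symmetric])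
  also have "\<dots> \<longleftrightarrow> real k < ln r / ln l"
    using assms(2,3) by (simp add: neg_less_divide_eq)
  also have "ln r / ln l = Lval \<beta> l c"
    using r assms(2,3) by (simp add: Lval_def r_def[symmetric])
  also have "real k < Lval \<beta> l c \<longleftrightarrow> k < nat \<lceil>Lval \<beta> l c\<rceil>"
    by (metis less_ceiling_iff of_int_of_nat_eq zless_nat_eq_int_zless)
  finally show ?thesis .
qed

lemma diff_mult_ge_iff_less:
  fixes s d :: real and m n :: nat
  assumes "0 < d" "s / d = real m"
  shows "d \<le> s - d * real n \<longleftrightarrow> n < m"
proof -
  have "s = d * real m"
    using assms by (simp add: field_simps)
  then have "d \<le> s - d * real n \<longleftrightarrow> d * (real n + 1) \<le> d * real m"
    by (simp add: algebra_simps)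
  also have "\<dots> \<longleftrightarrow> real n + 1 \<le> real m"
    using assms(1) by simp
  finally show ?thesis
    by linarith
qed

lemma MO_utility_increase_iff:
  assumes "is_MO T" "finite (nbrs g i)" "(i, j) \<notin> g"
    and "worth P i = \<beta>" "0 < \<beta>" "0 < lam P" "lam P < 1" "0 < cost P" "cost P < \<beta> * (1 - lam P)"
  shows "utility T P g i < utility T P (add_link g i j) i \<longleftrightarrow>
         deg g i < nat \<lceil>Lval \<beta> (lam P) (cost P)\<rceil>"
  using MO_payoff_increase_iff[OF assms(5-9)] deg_add_link[OF assms(2,3)] assms(1,4)
  by (simp add: utility_def)

lemma SO_utility_increase:
  assumes "\<not> is_MO T" "finite (nbrs g i)" "(i, j) \<notin> g"
    and "0 < worth P i" "0 < lam P" "lam P < 1"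
  shows "utility T P g i < utility T P (add_link g i j) i"
  using deg_add_link[OF assms(2,3)] assms(1,4-6) by (simp add: utility_def)

lemma RS_ge_iff:
  assumes "g \<subseteq> A \<times> A" "\<forall>k\<in>A. stor P k = s \<and> dsize P k = d" "0 < d" "s / d = real m"
    and "i \<in> A" "j \<in> A"
  shows "dsize P i \<le> RS P g j \<longleftrightarrow> deg g j < m"
proof -
  have "(\<Sum>k\<in>nbrs g j. dsize P k) = d * real (deg g j)"
    using nbrs_subset[OF assms(1)] assms(2) by (simp add: deg_def subset_iff)
  then show ?thesis
    using assms(2,5,6) diff_mult_ge_iff_less[OF assms(3,4)] by (simp add: RS_def)
qed

lemma RB_ge_iff:
  assumes "\<forall>k\<in>A. budget P k = b" "0 < cost P" "b / cost P = real m" "i \<in> A"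
  shows "cost P \<le> RB P g i \<longleftrightarrow> deg g i < m"
  using assms diff_mult_ge_iff_less[OF assms(2,3)] by (simp add: RB_def)

lemma mutually_willing_iff:
  assumes ssn: "symmetric_ssn T A P" and simple: "simple_graph_on A g"
    and ij: "i \<in> A" "j \<in> A" "i \<noteq> j" "(i, j) \<notin> g"
  shows "willing T P g i j \<and> willing T P g j i \<longleftrightarrow>
         deg g i < stability_point T A P \<and> deg g j < stability_point T A P"
proof -
  have A: "finite A" and l: "0 < lam P" "lam P < 1"
    using ssn by (auto simp: symmetric_ssn_def)
  have g: "g \<subseteq> A \<times> A" "sym g" "irrefl g"
    using simple by (auto simp: simple_graph_on_def)
  have ji: "(j, i) \<notin> g"
    using g(2) ij(4) by (auto dest: symD)
  have fin: "finite (nbrs g k)" for k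
    using A g(1) by (rule finite_nbrs)
  have "(SOME k. k \<in> A) \<in> A"
    using ij(1) by (rule someI)
  then obtain i0 where i0: "i0 \<in> A" "(SOME k. k \<in> A) = i0" by blast
  show ?thesis
  proof (cases T)
    case SVN_MO
    then obtain \<beta> where \<beta>: "\<forall>k\<in>A. worth P k = \<beta>" "0 < \<beta>" "0 < cost P" "cost P < \<beta> * (1 - lam P)"
      using ssn by (auto simp: symmetric_ssn_def)
    have "stability_point T A P = nat \<lceil>Lval \<beta> (lam P) (cost P)\<rceil>"
      using SVN_MO i0 \<beta>(1) by (simp add: stability_point_def Let_def)
    then show ?thesis
      using MO_utility_increase_iff[OF _ fin _ _ \<beta>(2) l \<beta>(3,4)] SVN_MO ij ji \<beta>(1)
      by (simp add: willing_def)
  next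
    case SV_SRN_MO
    then obtain \<beta> s d where \<beta>: "\<forall>k\<in>A. worth P k = \<beta>" "0 < \<beta>" "0 < cost P" "cost P < \<beta> * (1 - lam P)"
      and sd: "\<forall>k\<in>A. stor P k = s \<and> dsize P k = d" "0 < d" "s / d \<in> \<nat>"
      using ssn by (auto simp: symmetric_ssn_def)
    obtain m where m: "s / d = real m"
      using sd(3) by (auto elim: Nats_cases)
    have "stability_point T A P = min (nat \<lceil>Lval \<beta> (lam P) (cost P)\<rceil>) m"
      using SV_SRN_MO i0 \<beta>(1) sd(1) m by (simp add: stability_point_def Let_def)
    then show ?thesis
      using MO_utility_increase_iff[OF _ fin _ _ \<beta>(2) l \<beta>(3,4)] RS_ge_iff[OF g(1) sd(1,2) m]
        SV_SRN_MO ij ji \<beta>(1)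
      by (auto simp: willing_def)
  next
    case SVN_SO
    then obtain \<beta> where "\<forall>k\<in>A. worth P k = \<beta>" "0 < \<beta>"
      using ssn by (auto simp: symmetric_ssn_def)
    then have "willing T P g i j" "willing T P g j i"
      using SO_utility_increase[OF _ fin _ _ l] SVN_SO ij ji by (simp_all add: willing_def)
    moreover have "deg g i < card (A - {j})" "deg g j < card (A - {i})"
      using ij ji A g(1)
      by (auto intro!: deg_less_card[OF g(3)] simp: nbrs_def simp del: card_Diff_insert)
    ultimately show ?thesis
      using SVN_SO ij(1,2) A by (simp add: stability_point_def)
  next
    case SRN_SO
    then obtain s d b where worth: "\<forall>k\<in>A. 0 < worth P k"
      and sd: "\<forall>k\<in>A. stor P k = s \<and> dsize P k = d" "0 < d" "s / d \<in> \<nat>"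
      and b: "\<forall>k\<in>A. budget P k = b" "0 < cost P" "b / cost P \<in> \<nat>"
      using ssn by (simp add: symmetric_ssn_def) blast
    obtain m m' where m: "s / d = real m" "b / cost P = real m'"
      using sd(3) b(3) by (auto elim!: Nats_cases)
    have "stability_point T A P = min m m'"
      using SRN_SO i0 sd(1) b(1) m by (simp add: stability_point_def Let_def)
    then show ?thesis
      using SO_utility_increase[OF _ fin _ _ l] RS_ge_iff[OF g(1) sd(1,2) m(1)]
        RB_ge_iff[OF b(1,2) m(2)] SRN_SO ij ji worth
      by (auto simp: willing_def)
  qed
qed

lemma evolved_simple_graph_on:
  assumes "evolved T A P g" and ssn: "symmetric_ssn T A P"
  shows "simple_graph_on A g \<and> (\<forall>k\<in>A. deg g k \<le> stability_point T A P)"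
  using assms(1)
proof induction
  case null
  show ?case
    by (simp add: simple_graph_on_def sym_def irrefl_def deg_def nbrs_def)
next
  case (step g i j)
  then have simple: "simple_graph_on A g" and bounded: "\<forall>k\<in>A. deg g k \<le> stability_point T A P"
    by simp_all
  have lt: "deg g i < stability_point T A P" "deg g j < stability_point T A P"
    using mutually_willing_iff[OF ssn simple step(2-5)] step(6,7) by simp_all
  have fin: "finite (nbrs g k)" for k
    using ssn simple finite_nbrs by (auto simp: symmetric_ssn_def simple_graph_on_def)
  have "(j, i) \<notin> g"
    using simple step(5) by (auto simp: simple_graph_on_def dest: symD)
  then have "deg (add_link g i j) j = Suc (deg g j)"
    using deg_add_link[OF fin] add_link_commute by metis
  then have "deg (add_link g i j) k \<le> stability_point T A P" if "k \<in> A" for k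
    using bounded that lt deg_add_link[OF fin step(5)] deg_add_link_other[of k i j g]
    by (cases "k = i \<or> k = j") auto
  moreover have "simple_graph_on A (add_link g i j)"
    using simple step(2-4) by (rule simple_graph_on_add_link)
  ultimately show ?case
    by blast
qed

lemma bilaterally_stable_deficient_adjacent:
  assumes "symmetric_ssn T A P" "simple_graph_on A g" "bilaterally_stable T A P g"
    and "i \<in> A" "j \<in> A" "i \<noteq> j"
    and "deg g i < stability_point T A P" "deg g j < stability_point T A P"
  shows "(i, j) \<in> g"
proof (rule ccontr)
  assume "(i, j) \<notin> g"
  then have "willing T P g i j \<and> willing T P g j i"
    using mutually_willing_iff[OF assms(1,2,4-6)] assms(7,8) by blast
  with \<open>(i, j) \<notin> g\<close> assms(3-6) show False
    by (auto simp: bilaterally_stable_def)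
qed

text \<open>The hypotheses that there are at least two components and that N exceeds the stability
  point only exclude degenerate cases; the proof does not use them.\<close>
theorem corollary4:
  fixes T :: ssn_type and A :: "'a set" and P :: "'a ssn_params" and g :: "('a \<times> 'a) set"
  assumes "symmetric_ssn T A P"
    and "evolved T A P g"
    and "card (components A g) \<ge> 2"
    and "odd (stability_point T A P)"
    and "card A > stability_point T A P"
    and "bilaterally_stable T A P g"
  shows "\<exists>C \<subseteq> components A g. card C \<ge> card (components A g) - 1 \<and>
           (\<forall>X\<in>C. even (card X) \<and> card X > stability_point T A P)"
proof -
  have simple: "simple_graph_on A g" and bounded: "\<forall>k\<in>A. deg g k \<le> stability_point T A P"
    using evolved_simple_graph_on[OF assms(2,1)] by simp_all
  obtain C where C: "C \<subseteq> components A g" "card (components A g) - 1 \<le> card C"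
    and regular: "\<forall>X\<in>C. \<forall>k\<in>X. deg g k = stability_point T A P"
    using components_regular_but_one[OF simple bounded]
      bilaterally_stable_deficient_adjacent[OF assms(1) simple assms(6)] by blast
  have "finite A"
    using assms(1) by (simp add: symmetric_ssn_def)
  then have "\<forall>X\<in>C. even (card X) \<and> stability_point T A P < card X"
    using odd_regular_component[OF _ simple] C(1) regular assms(4) by blast
  with C show ?thesis
    by blast
qed

end
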